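(* Let $\epsilon>0$, $\mathbf C\in\mathbb R^{n\times n}$, $\mathbf b_1,\dots,\mathbf b_N\in\Sigma_n$, weights $\lambda\in\Sigma_N$ with $\lambda_k>0$ for all $k$, $A:\mathbb R^n\to\mathbb R^p$ linear with adjoint $A^*$, and $J:\mathbb R^p\to\mathbb R$ convex (finite-valued) with convex conjugate $J^*$. Consider the primal problem $$(\mathcal P)\qquad \min_{\mathbf a\in\Sigma_n}\sum_{k=1}^N\lambda_kF_{\mathbf b_k}(\mathbf a)+J(A\mathbf a)$$ and the dual problem $$(\mathcal D)\qquad \inf_{\mathbf f_1,\dots,\mathbf f_N\in\mathbb R^n,\ \mathbf g\in\mathbb R^p}\sum_{k=1}^N\lambda_kF^*_{\mathbf b_k}(\mathbf f_k)+J^*(\mathbf g)\quad\text{s.t.}\quad A^*\mathbf g+\sum_{k=1}^N\lambda_k\mathbf f_k=0.$$ Then $\min(\mathcal P)=-\inf(\mathcal D)$, and if $((\mathbf f_k)_{k=1}^N,\mathbf g)$ is a minimizer of $(\mathcal D)$, then the vectors $\nabla F^*_{\mathbf b_k}(\mathbf f_k)$, $k=1,\dots,N$, are all equal to a common vector $\mathbf a$, and this $\mathbf a$ is a solution of $(\mathcal P)$.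
   Context: $\Sigma_n=\{\mathbf a\in\mathbb R^n_+:\sum_i\mathbf a_i=1\}$; $U(\mathbf a,\mathbf b)=\{\mathbf P\in\mathbb R_+^{n\times n}:\mathbf P\mathbf 1_n=\mathbf a,\ \mathbf P^\top\mathbf 1_n=\mathbf b\}$; $\mathbf H(\mathbf P)=-\sum_{i,j}\mathbf P_{i,j}(\log\mathbf P_{i,j}-1)$ with $0\log0=0$; $W^\epsilon_{\mathbf C}(\mathbf a,\mathbf b)=\min_{\mathbf P\in U(\mathbf a,\mathbf b)}\sum_{i,j}\mathbf P_{i,j}\mathbf C_{i,j}-\epsilon\mathbf H(\mathbf P)$. For $\mathbf b\in\Sigma_n$, $F_{\mathbf b}(\mathbf a)=W^\epsilon_{\mathbf C}(\mathbf a,\mathbf b)$ for $\mathbf a\in\Sigma_n$, and $F^*_{\mathbf b}(\mathbf f)=\max_{\mathbf a\in\Sigma_n}\langle\mathbf f,\mathbf a\rangle-F_{\mathbf b}(\mathbf a)$ for $\mathbf f\in\mathbb R^n$ (a differentiable function on $\mathbb R^n$). $J^*(\mathbf g)=\sup_{\mathbf y\in\mathbb R^p}\langle\mathbf g,\mathbf y\rangle-J(\mathbf y)$. *)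

theory Defs
  imports "HOL-Analysis.Analysis"
begin

definition prob_simplex :: "(real^'n) set" where
  "prob_simplex = {a. (\<forall>i. 0 \<le> a$i) \<and> (\<Sum>i\<in>UNIV. a$i) = 1}"

definition transport_plans :: "real^'n \<Rightarrow> real^'n \<Rightarrow> (real^'n^'n) set" where
  "transport_plans a b = {P. (\<forall>i j. 0 \<le> P$i$j) \<and> (\<forall>i. (\<Sum>j\<in>UNIV. P$i$j) = a$i)
                               \<and> (\<forall>j. (\<Sum>i\<in>UNIV. P$i$j) = b$j)}"

definition entropy :: "real^'n^'n \<Rightarrow> real" where
  "entropy P = - (\<Sum>i\<in>UNIV. \<Sum>j\<in>UNIV. (if P$i$j = 0 then 0 else P$i$j * ln (P$i$j)) - P$i$j)"

text \<open>Entropic OT cost W^eps_C(a,b) (a minimum, attained; written as an infimum).\<close>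
definition W_eps :: "real \<Rightarrow> real^'n^'n \<Rightarrow> real^'n \<Rightarrow> real^'n \<Rightarrow> real" where
  "W_eps eps C a b = Inf ((\<lambda>P. (\<Sum>i\<in>UNIV. \<Sum>j\<in>UNIV. P$i$j * C$i$j) - eps * entropy P)
                           ` transport_plans a b)"

definition F_b :: "real \<Rightarrow> real^'n^'n \<Rightarrow> real^'n \<Rightarrow> real^'n \<Rightarrow> real" where
  "F_b eps C b a = W_eps eps C a b"

text \<open>F*_b(f) = max over the simplex (written as a supremum; it is attained).\<close>
definition F_b_conj :: "real \<Rightarrow> real^'n^'n \<Rightarrow> real^'n \<Rightarrow> real^'n \<Rightarrow> real" where
  "F_b_conj eps C b f = Sup ((\<lambda>a. f \<bullet> a - F_b eps C b a) ` prob_simplex)"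

definition conj_fun :: "(real^'p \<Rightarrow> real) \<Rightarrow> real^'p \<Rightarrow> ereal" where
  "conj_fun J g = (SUP y\<in>UNIV. ereal (g \<bullet> y - J y))"

definition primal_obj ::
  "real \<Rightarrow> real^'n^'n \<Rightarrow> ('k::finite \<Rightarrow> real^'n) \<Rightarrow> ('k \<Rightarrow> real)
     \<Rightarrow> (real^'n \<Rightarrow> real^'p) \<Rightarrow> (real^'p \<Rightarrow> real) \<Rightarrow> real^'n \<Rightarrow> real" where
  "primal_obj eps C b lam A J a = (\<Sum>k\<in>UNIV. lam k * F_b eps C (b k) a) + J (A a)"

definition dual_obj ::
  "real \<Rightarrow> real^'n^'n \<Rightarrow> ('k::finite \<Rightarrow> real^'n) \<Rightarrow> ('k \<Rightarrow> real)
     \<Rightarrow> (real^'p \<Rightarrow> real) \<Rightarrow> ('k \<Rightarrow> real^'n) \<Rightarrow> real^'p \<Rightarrow> ereal" where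
  "dual_obj eps C b lam J f g = ereal (\<Sum>k\<in>UNIV. lam k * F_b_conj eps C (b k) (f k)) + conj_fun J g"

definition dual_feasible ::
  "('k::finite \<Rightarrow> real) \<Rightarrow> (real^'n \<Rightarrow> real^'p) \<Rightarrow> ('k \<Rightarrow> real^'n) \<Rightarrow> real^'p \<Rightarrow> bool" where
  "dual_feasible lam A f g \<longleftrightarrow> adjoint A g + (\<Sum>k\<in>UNIV. lam k *\<^sub>R f k) = 0"

end

theory Submission
  imports Defs
begin

(*
  For fixed b, the supremum defining F*_b is a supremum over pairs (a, P) with P a transport plan
  with marginals a and b; by the Gibbs variational principle it is attained at the Gibbs plan
  P_ij = b_j exp((f_i - C_ij)/eps) / Z_j(f), which gives F*_b the closed form of a weighted
  log-sum-exp. Hence F*_b is differentiable, its gradient being the first marginal of the Gibbs plan,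
  and F_b(a) + F*_b(f) >= <f, a> with equality at that marginal.

  Weak duality is Fenchel-Young for each F_b_k and for J. Adding constants to the f_k whose
  lam-weighted sum vanishes changes neither feasibility nor the dual value; after this normalisation
  the dual objective is coercive, so a minimising sequence has a convergent subsequence, and lower
  semicontinuity yields a dual minimiser. At a dual minimiser, moving f_k and f_l in opposite
  directions shows that all gradients of F*_b_k(f_k) agree with one vector a, and moving g together
  with every f_k shows that A a is a subgradient of J* at g. Then every Fenchel-Young inequality is
  an equality, so a is primal optimal and the duality gap vanishes.
*)

section \<open>Gibbs variational principle\<close>

definition xlnx :: "real \<Rightarrow> real" where "xlnx x = (if x = 0 then 0 else x * ln x)"

lemma gibbs_variational_le:
  fixes x c :: "'i::finite \<Rightarrow> real"
  assumes eps: "eps > 0" and x_nonneg: "\<forall>i. 0 \<le> x i" and x_sum: "(\<Sum>i\<in>UNIV. x i) = \<beta>"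
  shows "(\<Sum>i\<in>UNIV. x i * c i - eps * (xlnx (x i) - x i))
     \<le> eps * \<beta> * ln (\<Sum>i\<in>UNIV. exp (c i / eps)) - eps * xlnx \<beta> + eps * \<beta>"
proof (cases "\<beta> = 0")
  case True
  then have "\<forall>i. x i = 0" using x_nonneg x_sum by (simp add: sum_nonneg_eq_0_iff)
  then show ?thesis using True by (simp add: xlnx_def)
next
  case False
  have \<beta>_pos: "\<beta> > 0" using False x_sum x_nonneg by (metis sum_nonneg order_le_less)
  define Z where "Z = (\<Sum>i\<in>UNIV. exp (c i / eps))"
  have Z_pos: "Z > 0" unfolding Z_def by (simp add: sum_pos)
  have term_le: "x i * c i - eps * (xlnx (x i) - x i)
     \<le> eps * x i * (ln Z - ln \<beta>) + eps * (\<beta> * exp (c i / eps) / Z - x i) + eps * x i" for i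
  proof (cases "x i = 0")
    case True
    then show ?thesis using eps Z_pos \<beta>_pos by (simp add: xlnx_def)
  next
    case False
    then have x_pos: "x i > 0" using x_nonneg[rule_format, of i] by linarith
    define t where "t = \<beta> * exp (c i / eps) / Z / x i"
    have t_pos: "t > 0" unfolding t_def using x_pos \<beta>_pos Z_pos by simp
    have ln_t: "ln t = ln \<beta> + c i / eps - ln Z - ln (x i)"
      unfolding t_def using x_pos \<beta>_pos Z_pos by (simp add: ln_div ln_mult)
    have "eps * x i * ln t \<le> eps * x i * (t - 1)"
      using ln_le_minus_one[OF t_pos] eps x_pos by simp
    moreover have "eps * x i * (t - 1) = eps * (\<beta> * exp (c i / eps) / Z - x i)"
      unfolding t_def using x_pos by (simp add: field_simps)
    moreover have "x i * c i - eps * (xlnx (x i) - x i) = eps * x i * (ln Z - ln \<beta>) + eps * x i * ln t + eps * x i"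
      using False eps by (simp add: xlnx_def ln_t field_simps)
    ultimately show ?thesis by linarith
  qed
  have "(\<Sum>i\<in>UNIV. x i * c i - eps * (xlnx (x i) - x i))
     \<le> (\<Sum>i\<in>UNIV. eps * x i * (ln Z - ln \<beta>) + eps * (\<beta> * exp (c i / eps) / Z - x i) + eps * x i)"
    by (rule sum_mono) (rule term_le)
  also have "\<dots> = eps * \<beta> * (ln Z - ln \<beta>) + eps * (\<beta> * Z / Z - \<beta>) + eps * \<beta>"
    by (simp add: sum.distrib sum_subtractf x_sum Z_def sum_distrib_left[symmetric]
        sum_distrib_right[symmetric] sum_divide_distrib[symmetric])
  also have "\<dots> = eps * \<beta> * ln Z - eps * xlnx \<beta> + eps * \<beta>"
    using Z_pos False by (simp add: xlnx_def algebra_simps)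
  finally show ?thesis unfolding Z_def .
qed

lemma gibbs_variational_eq:
  fixes c :: "'i::finite \<Rightarrow> real"
  assumes eps: "eps > 0" and \<beta>_nonneg: "\<beta> \<ge> 0"
  defines "Z \<equiv> (\<Sum>i\<in>UNIV. exp (c i / eps))"
  defines "x \<equiv> (\<lambda>i. \<beta> * exp (c i / eps) / Z)"
  shows "(\<Sum>i\<in>UNIV. x i * c i - eps * (xlnx (x i) - x i))
     = eps * \<beta> * ln Z - eps * xlnx \<beta> + eps * \<beta>"
proof (cases "\<beta> = 0")
  case True
  then show ?thesis by (simp add: x_def xlnx_def)
next
  case False
  have \<beta>_pos: "\<beta> > 0" using False \<beta>_nonneg by simp
  have Z_pos: "Z > 0" unfolding Z_def by (simp add: sum_pos)
  have term_eq: "x i * c i - eps * (xlnx (x i) - x i) = x i * (eps * ln Z - eps * ln \<beta> + eps)" for i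
  proof -
    have x_pos: "x i > 0" unfolding x_def using \<beta>_pos Z_pos by simp
    have ln_x: "eps * ln (x i) = eps * ln \<beta> + c i - eps * ln Z"
      unfolding x_def using \<beta>_pos Z_pos eps by (simp add: ln_div ln_mult field_simps)
    have "x i * c i - eps * (xlnx (x i) - x i) = x i * c i - x i * (eps * ln (x i)) + eps * x i"
      using x_pos by (simp add: xlnx_def algebra_simps)
    also have "\<dots> = x i * (eps * ln Z - eps * ln \<beta> + eps)"
      unfolding ln_x by (simp add: algebra_simps)
    finally show ?thesis .
  qed
  have x_sum: "(\<Sum>i\<in>UNIV. x i) = \<beta>" unfolding x_def using Z_pos
    by (simp add: sum_divide_distrib[symmetric] sum_distrib_left[symmetric] Z_def)
  have "(\<Sum>i\<in>UNIV. x i * c i - eps * (xlnx (x i) - x i)) = \<beta> * (eps * ln Z - eps * ln \<beta> + eps)"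
    by (simp only: term_eq sum_distrib_right[symmetric] x_sum)
  then show ?thesis using False by (simp add: xlnx_def algebra_simps)
qed

section \<open>Closed form of the conjugate of the entropic transport cost\<close>

definition gibbs_partition :: "real \<Rightarrow> real^'n^'n \<Rightarrow> real^'n \<Rightarrow> 'n \<Rightarrow> real" where
  "gibbs_partition eps C f j = (\<Sum>i\<in>UNIV. exp ((f$i - C$i$j) / eps))"

definition gibbs_plan :: "real \<Rightarrow> real^'n^'n \<Rightarrow> real^'n \<Rightarrow> real^'n \<Rightarrow> real^'n^'n" where
  "gibbs_plan eps C b f = (\<chi> i j. b$j * exp ((f$i - C$i$j) / eps) / gibbs_partition eps C f j)"

definition gibbs_marginal :: "real \<Rightarrow> real^'n^'n \<Rightarrow> real^'n \<Rightarrow> real^'n \<Rightarrow> real^'n" where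
  "gibbs_marginal eps C b f = (\<chi> i. \<Sum>j\<in>UNIV. gibbs_plan eps C b f $ i $ j)"

definition lse_conj :: "real \<Rightarrow> real^'n^'n \<Rightarrow> real^'n \<Rightarrow> real^'n \<Rightarrow> real" where
  "lse_conj eps C b f =
     (\<Sum>j\<in>UNIV. eps * b$j * ln (gibbs_partition eps C f j) - eps * xlnx (b$j) + eps * b$j)"

definition entropic_cost :: "real \<Rightarrow> real^'n^'n \<Rightarrow> real^'n^'n \<Rightarrow> real" where
  "entropic_cost eps C P = (\<Sum>i\<in>UNIV. \<Sum>j\<in>UNIV. P$i$j * C$i$j) - eps * entropy P"

lemma gibbs_partition_pos: "gibbs_partition eps C f j > 0"
  unfolding gibbs_partition_def by (simp add: sum_pos)

lemma F_b_eq_Inf_entropic_cost: "F_b eps C b a = Inf (entropic_cost eps C ` transport_plans a b)"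
  unfolding F_b_def W_eps_def entropic_cost_def ..

lemma inner_minus_entropic_cost:
  assumes rows: "\<forall>i. (\<Sum>j\<in>UNIV. P$i$j) = a$i"
  shows "f \<bullet> a - entropic_cost eps C P =
     (\<Sum>j\<in>UNIV. \<Sum>i\<in>UNIV. P$i$j * (f$i - C$i$j) - eps * (xlnx (P$i$j) - P$i$j))"
proof -
  have "f \<bullet> a = (\<Sum>i\<in>UNIV. f$i * (\<Sum>j\<in>UNIV. P$i$j))"
    using rows by (simp add: inner_vec_def)
  also have "\<dots> = (\<Sum>i\<in>UNIV. \<Sum>j\<in>UNIV. P$i$j * f$i)"
    by (simp add: sum_distrib_left mult.commute)
  finally have fa: "f \<bullet> a = (\<Sum>i\<in>UNIV. \<Sum>j\<in>UNIV. P$i$j * f$i)" .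
  have "(\<Sum>j\<in>UNIV. \<Sum>i\<in>UNIV. P$i$j * (f$i - C$i$j) - eps * (xlnx (P$i$j) - P$i$j))
      = (\<Sum>i\<in>UNIV. \<Sum>j\<in>UNIV. P$i$j * (f$i - C$i$j) - eps * (xlnx (P$i$j) - P$i$j))"
    by (rule sum.swap)
  also have "\<dots> = f \<bullet> a - entropic_cost eps C P"
    unfolding fa entropic_cost_def entropy_def xlnx_def
    by (simp add: sum_subtractf sum_distrib_left right_diff_distrib)
  finally show ?thesis by simp
qed

lemma entropic_cost_bound:
  assumes eps: "eps > 0" and P: "P \<in> transport_plans a b"
  shows "f \<bullet> a - entropic_cost eps C P \<le> lse_conj eps C b f"
proof -
  have P_nonneg: "\<forall>i j. 0 \<le> P$i$j" and rows: "\<forall>i. (\<Sum>j\<in>UNIV. P$i$j) = a$i"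
    and cols: "\<forall>j. (\<Sum>i\<in>UNIV. P$i$j) = b$j"
    using P unfolding transport_plans_def by auto
  have "(\<Sum>i\<in>UNIV. P$i$j * (f$i - C$i$j) - eps * (xlnx (P$i$j) - P$i$j))
      \<le> eps * b$j * ln (gibbs_partition eps C f j) - eps * xlnx (b$j) + eps * b$j" for j
    using gibbs_variational_le[OF eps, of "\<lambda>i. P$i$j" "b$j" "\<lambda>i. f$i - C$i$j"] P_nonneg cols
    unfolding gibbs_partition_def by auto
  then show ?thesis
    unfolding inner_minus_entropic_cost[OF rows] lse_conj_def by (rule sum_mono)
qed

lemma gibbs_plan_transport_plan:
  assumes b: "b \<in> prob_simplex"
  shows "gibbs_plan eps C b f \<in> transport_plans (gibbs_marginal eps C b f) b"
proof -
  have "(\<Sum>i\<in>UNIV. b$j * exp ((f$i - C$i$j) / eps) / gibbs_partition eps C f j) = b$j" for j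
    using gibbs_partition_pos[of eps C f j]
    by (simp add: sum_divide_distrib[symmetric] sum_distrib_left[symmetric] gibbs_partition_def[symmetric])
  then show ?thesis
    using b gibbs_partition_pos unfolding transport_plans_def gibbs_plan_def gibbs_marginal_def prob_simplex_def
    by (auto intro!: divide_nonneg_pos mult_nonneg_nonneg)
qed

lemma transport_plan_marginal_simplex:
  assumes P: "P \<in> transport_plans a b" and b: "b \<in> prob_simplex"
  shows "a \<in> prob_simplex"
proof -
  have P_nonneg: "\<forall>i j. 0 \<le> P$i$j" and rows: "\<forall>i. (\<Sum>j\<in>UNIV. P$i$j) = a$i"
    and cols: "\<forall>j. (\<Sum>i\<in>UNIV. P$i$j) = b$j"
    using P unfolding transport_plans_def by auto
  have "0 \<le> a$i" for i using rows P_nonneg by (metis sum_nonneg)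
  have "(\<Sum>i\<in>UNIV. a$i) = (\<Sum>i\<in>UNIV. \<Sum>j\<in>UNIV. P$i$j)" using rows by simp
  also have "\<dots> = (\<Sum>j\<in>UNIV. \<Sum>i\<in>UNIV. P$i$j)" by (rule sum.swap)
  also have "\<dots> = (\<Sum>j\<in>UNIV. b$j)" using cols by simp
  finally have "(\<Sum>i\<in>UNIV. a$i) = (\<Sum>j\<in>UNIV. b$j)" .
  with \<open>\<And>i. 0 \<le> a$i\<close> b show ?thesis unfolding prob_simplex_def by simp
qed

lemma gibbs_marginal_simplex:
  "b \<in> prob_simplex \<Longrightarrow> gibbs_marginal eps C b f \<in> prob_simplex"
  by (rule transport_plan_marginal_simplex[OF gibbs_plan_transport_plan])

lemma entropic_cost_gibbs_plan:
  assumes eps: "eps > 0" and b: "b \<in> prob_simplex"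
  shows "entropic_cost eps C (gibbs_plan eps C b f) = f \<bullet> gibbs_marginal eps C b f - lse_conj eps C b f"
proof -
  let ?P = "gibbs_plan eps C b f"
  have rows: "\<forall>i. (\<Sum>j\<in>UNIV. ?P$i$j) = gibbs_marginal eps C b f $ i"
    using gibbs_plan_transport_plan[OF b] unfolding transport_plans_def by auto
  have "(\<Sum>i\<in>UNIV. ?P$i$j * (f$i - C$i$j) - eps * (xlnx (?P$i$j) - ?P$i$j))
      = eps * b$j * ln (gibbs_partition eps C f j) - eps * xlnx (b$j) + eps * b$j" for j
    using gibbs_variational_eq[OF eps, of "b$j" "\<lambda>i. f$i - C$i$j"] b
    unfolding gibbs_partition_def gibbs_plan_def prob_simplex_def by auto
  then have "f \<bullet> gibbs_marginal eps C b f - entropic_cost eps C ?P = lse_conj eps C b f"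
    unfolding inner_minus_entropic_cost[OF rows] lse_conj_def by simp
  then show ?thesis by simp
qed

lemma product_transport_plan:
  assumes "a \<in> prob_simplex" and "b \<in> prob_simplex"
  shows "(\<chi> i j. a$i * b$j) \<in> transport_plans a b"
  using assms unfolding transport_plans_def prob_simplex_def
  by (auto simp: sum_distrib_left[symmetric] sum_distrib_right[symmetric])

lemma F_b_fenchel_young:
  assumes eps: "eps > 0" and a: "a \<in> prob_simplex" and b: "b \<in> prob_simplex"
  shows "f \<bullet> a - lse_conj eps C b f \<le> F_b eps C b a"
  unfolding F_b_eq_Inf_entropic_cost
proof (rule cInf_greatest)
  show "entropic_cost eps C ` transport_plans a b \<noteq> {}"
    using product_transport_plan[OF a b] by blast
  show "f \<bullet> a - lse_conj eps C b f \<le> x" if "x \<in> entropic_cost eps C ` transport_plans a b" for x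
    using that entropic_cost_bound[OF eps, of _ a b f C] by force
qed

lemma F_b_gibbs_marginal:
  assumes eps: "eps > 0" and b: "b \<in> prob_simplex"
  shows "F_b eps C b (gibbs_marginal eps C b f) = f \<bullet> gibbs_marginal eps C b f - lse_conj eps C b f"
proof (rule antisym)
  let ?a = "gibbs_marginal eps C b f"
  have "bdd_below (entropic_cost eps C ` transport_plans ?a b)"
    using entropic_cost_bound[OF eps, of _ ?a b f C]
    by (intro bdd_belowI[where m = "f \<bullet> ?a - lse_conj eps C b f"]) force
  then show "F_b eps C b ?a \<le> f \<bullet> ?a - lse_conj eps C b f"
    unfolding F_b_eq_Inf_entropic_cost entropic_cost_gibbs_plan[OF eps b, symmetric]
    using gibbs_plan_transport_plan[OF b] by (intro cInf_lower) auto
  show "f \<bullet> ?a - lse_conj eps C b f \<le> F_b eps C b ?a"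
    by (rule F_b_fenchel_young[OF eps gibbs_marginal_simplex[OF b] b])
qed

lemma F_b_conj_eq_lse_conj:
  assumes eps: "eps > 0" and b: "b \<in> prob_simplex"
  shows "F_b_conj eps C b f = lse_conj eps C b f"
  unfolding F_b_conj_def
proof (rule cSup_eq_maximum)
  show "lse_conj eps C b f \<in> (\<lambda>a. f \<bullet> a - F_b eps C b a) ` prob_simplex"
    using gibbs_marginal_simplex[OF b] F_b_gibbs_marginal[OF eps b]
    by (force intro!: image_eqI[where x = "gibbs_marginal eps C b f"])
  show "x \<le> lse_conj eps C b f" if "x \<in> (\<lambda>a. f \<bullet> a - F_b eps C b a) ` prob_simplex" for x
    using that F_b_fenchel_young[OF eps _ b, of _ f C] by force
qed

lemma lse_conj_add_const:
  assumes eps: "eps > 0" and b: "b \<in> prob_simplex"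
  shows "lse_conj eps C b (f + c *\<^sub>R 1) = lse_conj eps C b f + c"
proof -
  have Z_shift: "gibbs_partition eps C (f + c *\<^sub>R 1) j = exp (c / eps) * gibbs_partition eps C f j" for j
    unfolding gibbs_partition_def using eps
    by (simp add: sum_distrib_left exp_add[symmetric] add_divide_distrib diff_divide_distrib algebra_simps)
  have "ln (gibbs_partition eps C (f + c *\<^sub>R 1) j) = c / eps + ln (gibbs_partition eps C f j)" for j
    unfolding Z_shift using gibbs_partition_pos[of eps C f j] by (simp add: ln_mult)
  then have "lse_conj eps C b (f + c *\<^sub>R 1) = lse_conj eps C b f + c * (\<Sum>j\<in>UNIV. b$j)"
    unfolding lse_conj_def using eps
    by (simp add: sum.distrib[symmetric] sum_distrib_left algebra_simps)
  then show ?thesis using b unfolding prob_simplex_def by simp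
qed

lemma inner_gibbs_marginal:
  "gibbs_marginal eps C b f \<bullet> h =
     (\<Sum>j\<in>UNIV. b$j * (\<Sum>i\<in>UNIV. exp ((f$i - C$i$j) / eps) * h$i) / gibbs_partition eps C f j)"
proof -
  have "gibbs_marginal eps C b f \<bullet> h
      = (\<Sum>i\<in>UNIV. \<Sum>j\<in>UNIV. b$j * exp ((f$i - C$i$j) / eps) / gibbs_partition eps C f j * h$i)"
    unfolding gibbs_marginal_def gibbs_plan_def inner_vec_def by (simp add: sum_distrib_right)
  also have "\<dots> = (\<Sum>j\<in>UNIV. \<Sum>i\<in>UNIV. b$j * exp ((f$i - C$i$j) / eps) / gibbs_partition eps C f j * h$i)"
    by (rule sum.swap)
  finally show ?thesis by (simp add: sum_distrib_left sum_divide_distrib mult.assoc)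
qed

lemma lse_conj_has_derivative:
  assumes eps: "eps > 0"
  shows "(lse_conj eps C b has_derivative (\<lambda>h. gibbs_marginal eps C b f \<bullet> h)) (at f)"
proof -
  have "((\<lambda>f. gibbs_partition eps C f j) has_derivative
      (\<lambda>h. \<Sum>i\<in>UNIV. exp ((f$i - C$i$j) / eps) * (h$i / eps))) (at f)" for j
    unfolding gibbs_partition_def using eps
    by (intro has_derivative_sum)
       (auto intro!: derivative_eq_intros bounded_linear_imp_has_derivative bounded_linear_vec_nth
         simp: field_simps)
  then have d_partition: "((\<lambda>f. gibbs_partition eps C f j) has_derivative
      (\<lambda>h. (\<Sum>i\<in>UNIV. exp ((f$i - C$i$j) / eps) * h$i) / eps)) (at f)" for j
    by (simp add: sum_divide_distrib)
  have "((\<lambda>f. eps * b$j * ln (gibbs_partition eps C f j) - eps * xlnx (b$j) + eps * b$j) has_derivative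
      (\<lambda>h. b$j * (\<Sum>i\<in>UNIV. exp ((f$i - C$i$j) / eps) * h$i) / gibbs_partition eps C f j)) (at f)" for j
    using gibbs_partition_pos eps
    by (auto intro!: derivative_eq_intros d_partition simp: divide_inverse mult.assoc)
  then have "(lse_conj eps C b has_derivative (\<lambda>h. \<Sum>j\<in>UNIV.
      b$j * (\<Sum>i\<in>UNIV. exp ((f$i - C$i$j) / eps) * h$i) / gibbs_partition eps C f j)) (at f)"
    unfolding lse_conj_def[abs_def] by (rule has_derivative_sum)
  then show ?thesis by (simp only: inner_gibbs_marginal)
qed

lemma F_b_conj_has_derivative:
  assumes "eps > 0" and "b \<in> prob_simplex"
  shows "(F_b_conj eps C b has_derivative (\<lambda>h. gibbs_marginal eps C b f \<bullet> h)) (at f)"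
proof -
  have "F_b_conj eps C b = lse_conj eps C b"
    using F_b_conj_eq_lse_conj[OF assms] by blast
  then show ?thesis using lse_conj_has_derivative[OF assms(1)] by simp
qed

lemma has_field_derivative_along_line:
  assumes "(g has_derivative (\<lambda>h. v \<bullet> h)) (at x)"
  shows "((\<lambda>t. g (x + t *\<^sub>R w)) has_field_derivative (v \<bullet> w)) (at 0)"
proof -
  have "((\<lambda>t. x + t *\<^sub>R w) has_derivative (\<lambda>s. s *\<^sub>R w)) (at 0)"
    by (auto intro!: derivative_eq_intros)
  moreover have "(g has_derivative (\<lambda>h. v \<bullet> h)) (at (x + 0 *\<^sub>R w))"
    using assms by simp
  ultimately have "((\<lambda>t. g (x + t *\<^sub>R w)) has_derivative (\<lambda>s. v \<bullet> (s *\<^sub>R w))) (at 0)"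
    by (rule has_derivative_compose)
  moreover have "(\<lambda>s. v \<bullet> (s *\<^sub>R w)) = (*) (v \<bullet> w)" by (auto simp: mult.commute)
  ultimately show ?thesis by (simp add: has_field_derivative_def)
qed

lemma secant_lower_bound_le_deriv:
  fixes \<phi> :: "real \<Rightarrow> real"
  assumes deriv: "(\<phi> has_field_derivative d) (at 0)"
    and secant: "\<And>t. 0 < t \<Longrightarrow> t < 1 \<Longrightarrow> \<phi> 0 + m * t \<le> \<phi> t"
  shows "m \<le> d"
proof -
  have "(\<phi> has_field_derivative d) (at 0 within {0<..})"
    using deriv by (rule has_field_derivative_at_within)
  then have "((\<lambda>t. (\<phi> t - \<phi> 0) / t) \<longlongrightarrow> d) (at_right 0)"
    unfolding has_field_derivative_iff by simp
  moreover have "\<forall>\<^sub>F t in at_right 0. m \<le> (\<phi> t - \<phi> 0) / t"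
    using eventually_at_right_real[OF zero_less_one]
  proof eventually_elim
    case (elim t)
    then have "m * t \<le> \<phi> t - \<phi> 0" using secant[of t] by simp
    then show ?case using elim by (simp add: pos_le_divide_eq)
  qed
  ultimately show ?thesis by (rule tendsto_lowerbound) simp
qed

lemma bounded_sequences_convergent_subseq:
  fixes F :: "nat \<Rightarrow> 'k::finite \<Rightarrow> real^'n" and G :: "nat \<Rightarrow> real^'p"
  assumes F_bound: "\<forall>n k i. \<bar>F n k $ i\<bar> \<le> R" and G_bound: "\<forall>n. norm (G n) \<le> R"
  obtains r fs gs where "strict_mono r" and "\<forall>k. (\<lambda>n. F (r n) k) \<longlonglongrightarrow> fs k"
    and "(\<lambda>n. G (r n)) \<longlonglongrightarrow> gs"
proof -
  define x where "x n = ((\<chi> k. F n k) :: real^'n^'k, G n)" for n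
  have "norm ((\<chi> k. F n k) :: real^'n^'k) \<le> real CARD('k) * (real CARD('n) * R)" for n
  proof -
    have "norm ((\<chi> k. F n k) :: real^'n^'k) \<le> (\<Sum>k\<in>UNIV. norm (F n k))"
      by (simp add: norm_vec_def L2_set_le_sum)
    also have "\<dots> \<le> (\<Sum>k\<in>(UNIV::'k set). \<Sum>i\<in>(UNIV::'n set). R)"
    proof (rule sum_mono)
      fix k
      have "norm (F n k) \<le> (\<Sum>i\<in>UNIV. \<bar>F n k $ i\<bar>)" by (rule norm_le_l1_cart)
      also have "\<dots> \<le> (\<Sum>i\<in>(UNIV::'n set). R)" using F_bound by (intro sum_mono) auto
      finally show "norm (F n k) \<le> (\<Sum>i\<in>(UNIV::'n set). R)" .
    qed
    finally show ?thesis by simp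
  qed
  then have "bounded (range (\<lambda>n. (\<chi> k. F n k) :: real^'n^'k))"
    unfolding bounded_iff by blast
  moreover have "bounded (range G)" unfolding bounded_iff using G_bound by blast
  ultimately have "bounded (range x)"
    unfolding x_def by (rule bounded_subset[OF bounded_Times]) auto
  then obtain l r where r: "strict_mono r" and lim: "(x \<circ> r) \<longlonglongrightarrow> l"
    using bounded_imp_convergent_subsequence by blast
  have "(\<lambda>n. F (r n) k) \<longlonglongrightarrow> fst l $ k" for k
    using tendsto_vec_nth[OF tendsto_fst[OF lim], of k] unfolding x_def by simp
  moreover have "(\<lambda>n. G (r n)) \<longlonglongrightarrow> snd l"
    using tendsto_snd[OF lim] unfolding x_def by simp
  ultimately show ?thesis using r that by blast
qed

definition uniform_dist :: "real^'n" where "uniform_dist = (\<chi> i. 1 / real CARD('n))"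

lemma uniform_dist_prob_simplex: "uniform_dist \<in> prob_simplex"
  unfolding uniform_dist_def prob_simplex_def by simp

lemma inner_uniform_dist: "(v :: real^'n) \<bullet> uniform_dist = (\<Sum>i\<in>UNIV. v$i) / real CARD('n)"
  unfolding uniform_dist_def inner_vec_def by (simp add: sum_divide_distrib)

lemma axis_prob_simplex: "axis i 1 \<in> prob_simplex"
  unfolding prob_simplex_def axis_def by simp

lemma component_bound_by_mean:
  fixes v :: "real^'n"
  assumes above: "\<forall>j. v$j - v \<bullet> uniform_dist \<le> r"
  shows "\<bar>v$i\<bar> \<le> \<bar>v \<bullet> uniform_dist\<bar> + real CARD('n) * r"
proof -
  define \<mu> where "\<mu> = v \<bullet> uniform_dist"
  have up: "v$j - \<mu> \<le> r" for j using above unfolding \<mu>_def by blast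
  have centered: "(\<Sum>j\<in>UNIV. v$j - \<mu>) = 0"
    unfolding \<mu>_def inner_uniform_dist by (simp add: sum_subtractf)
  have "0 \<le> real CARD('n) * r"
    using sum_bounded_above[of UNIV "\<lambda>j. v$j - \<mu>" r] up centered by simp
  then have r_nonneg: "0 \<le> r" by (simp add: zero_le_mult_iff)
  have "(\<Sum>j\<in>UNIV - {i}. v$j - \<mu>) \<le> real (card (UNIV - {i} :: 'n set)) * r"
    by (rule sum_bounded_above) (rule up)
  also have "\<dots> \<le> real CARD('n) * r"
    using r_nonneg by (intro mult_right_mono) (auto simp: card_mono)
  finally have "- (real CARD('n) * r) \<le> v$i - \<mu>"
    using centered sum.remove[of UNIV i "\<lambda>j. v$j - \<mu>"] by simp
  moreover have "r \<le> real CARD('n) * r"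
    using r_nonneg by (simp add: mult_le_cancel_right1)
  ultimately show ?thesis using up[of i] unfolding \<mu>_def by linarith
qed

lemma inner_one_uniform_dist: "(1 :: real^'n) \<bullet> uniform_dist = 1"
  unfolding inner_uniform_dist by simp

section \<open>Subgradients and convex conjugates\<close>

lemma convex_on_subgradient_exists:
  fixes J :: "'a::euclidean_space \<Rightarrow> real"
  assumes convex: "convex_on UNIV J"
  shows "\<exists>g. \<forall>y. J x + g \<bullet> (y - x) \<le> J y"
proof -
  define E where "E = epigraph UNIV J"
  have "convex E" unfolding E_def by (rule convex_epigraphI[OF convex])
  have x_in: "(x, J x) \<in> E" unfolding E_def by (simp add: mem_epigraph)
  have "(x, J x) \<notin> rel_interior E"
  proof
    assume "(x, J x) \<in> rel_interior E"
    then obtain e where e: "e > 0" "cball (x, J x) e \<inter> affine hull E \<subseteq> E"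
      unfolding rel_interior_cball by blast
    have "(x, J x + 1) \<in> E" unfolding E_def by (simp add: mem_epigraph)
    then have "(1 + e) *\<^sub>R (x, J x) + (- e) *\<^sub>R (x, J x + 1) \<in> affine hull E"
      using x_in by (intro mem_affine[OF affine_affine_hull]) (auto intro: hull_inc)
    moreover have "(1 + e) *\<^sub>R (x, J x) + (- e) *\<^sub>R (x, J x + 1) = (x, J x - e)"
      by (simp add: algebra_simps)
    moreover have "(x, J x - e) \<in> cball (x, J x) e"
      using e by (simp add: dist_Pair_Pair)
    ultimately have "(x, J x - e) \<in> E" using e by auto
    then show False using e unfolding E_def by (simp add: mem_epigraph)
  qed
  then obtain n where "n \<noteq> 0" and supp: "\<And>z. z \<in> E \<Longrightarrow> n \<bullet> (x, J x) \<le> n \<bullet> z"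
    using supporting_hyperplane_rel_boundary[OF \<open>convex E\<close> x_in] by metis
  then obtain u s where n: "n = (u, s)" and "(u, s) \<noteq> 0" by (cases n) auto
  have supp': "u \<bullet> x + s * J x \<le> u \<bullet> y + s * t" if "J y \<le> t" for y t
    using supp[of "(y, t)"] that unfolding n E_def by (simp add: mem_epigraph)
  have "s \<ge> 0" using supp'[of x "J x + 1"] by (simp add: algebra_simps)
  moreover have "s \<noteq> 0"
  proof
    assume "s = 0"
    then have "u \<bullet> u \<le> 0" using supp'[of "x - u" "J (x - u)"] by (simp add: inner_diff_right)
    then have "u = 0" by (metis inner_gt_zero_iff not_le)
    with \<open>s = 0\<close> \<open>(u, s) \<noteq> 0\<close> show False by (simp add: zero_prod_def)
  qed
  ultimately have s_pos: "s > 0" by simp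
  have "J x + (- (1 / s)) *\<^sub>R u \<bullet> (y - x) \<le> J y" for y
  proof -
    have "s * (J x + (- (1 / s)) *\<^sub>R u \<bullet> (y - x)) \<le> s * J y"
      using supp'[of y "J y"] s_pos by (simp add: inner_diff_right algebra_simps)
    then show ?thesis using s_pos by simp
  qed
  then show ?thesis by blast
qed

lemma convex_on_bounded_above_cball:
  fixes J :: "'a::euclidean_space \<Rightarrow> real"
  assumes "convex_on UNIV J"
  shows "\<exists>M. \<forall>y\<in>cball c r. J y \<le> M"
proof (cases "cball c r = {}")
  case False
  have "continuous_on (cball c r) J"
    using convex_on_continuous[OF open_UNIV assms] continuous_on_subset by blast
  then show ?thesis
    using continuous_attains_sup[OF compact_cball False] by blast
qed auto

lemma conj_fun_ge: "ereal (g \<bullet> y - J y) \<le> conj_fun J g"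
  unfolding conj_fun_def by (rule SUP_upper) simp

lemma conj_fun_le: "(\<And>y. g \<bullet> y - J y \<le> c) \<Longrightarrow> conj_fun J g \<le> ereal c"
  unfolding conj_fun_def by (rule SUP_least) simp

lemma conj_fun_real:
  assumes "conj_fun J g \<noteq> \<infinity>"
  obtains c where "conj_fun J g = ereal c"
proof -
  have "conj_fun J g \<noteq> -\<infinity>" using conj_fun_ge[of g 0 J] by auto
  with assms that show ?thesis by (cases "conj_fun J g") auto
qed

lemma conj_fun_at_subgradient:
  assumes "\<forall>y. J y0 + g \<bullet> (y - y0) \<le> J y"
  shows "conj_fun J g = ereal (g \<bullet> y0 - J y0)"
proof (rule antisym)
  show "conj_fun J g \<le> ereal (g \<bullet> y0 - J y0)"
    by (rule conj_fun_le) (use assms in \<open>auto simp: inner_diff_right algebra_simps\<close>)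
qed (rule conj_fun_ge)

lemma conj_fun_segment_le:
  assumes "conj_fun J g = ereal cg" and "conj_fun J h = ereal ch" and "0 \<le> t" and "t \<le> 1"
  shows "conj_fun J (g + t *\<^sub>R (h - g)) \<le> ereal ((1 - t) * cg + t * ch)"
proof (rule conj_fun_le)
  fix y
  have "g \<bullet> y - J y \<le> cg" using conj_fun_ge[of g y J] assms(1) by simp
  moreover have "h \<bullet> y - J y \<le> ch" using conj_fun_ge[of h y J] assms(2) by simp
  ultimately have "(1 - t) * (g \<bullet> y - J y) + t * (h \<bullet> y - J y) \<le> (1 - t) * cg + t * ch"
    using assms(3,4) by (intro add_mono mult_left_mono) auto
  then show "(g + t *\<^sub>R (h - g)) \<bullet> y - J y \<le> (1 - t) * cg + t * ch"
    by (simp add: inner_add_left inner_diff_left algebra_simps)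
qed

lemma conj_fun_ge_norm:
  assumes M: "\<forall>y\<in>cball c 1. J y \<le> M"
  shows "ereal (g \<bullet> c + norm g - M) \<le> conj_fun J g"
proof -
  define y where "y = (if g = 0 then c else c + (1 / norm g) *\<^sub>R g)"
  have "y \<in> cball c 1" unfolding y_def by (simp add: dist_norm)
  moreover have "g \<bullet> y = g \<bullet> c + norm g"
    unfolding y_def by (simp add: inner_add_right power2_norm_eq_inner[symmetric] power2_eq_square)
  ultimately have "g \<bullet> c + norm g - M \<le> g \<bullet> y - J y" using M by auto
  then show ?thesis using conj_fun_ge[of g y J] by (meson ereal_less_eq(3) order_trans)
qed

lemma conj_fun_eq_at_conj_subgradient:
  fixes J :: "real^'p \<Rightarrow> real"
  assumes convex: "convex_on UNIV J" and cg: "conj_fun J g = ereal cg"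
    and subgrad: "\<And>h c. conj_fun J h = ereal c \<Longrightarrow> cg + y0 \<bullet> (h - g) \<le> c"
  shows "cg = g \<bullet> y0 - J y0"
proof -
  obtain g1 where "\<forall>y. J y0 + g1 \<bullet> (y - y0) \<le> J y"
    using convex_on_subgradient_exists[OF convex] by blast
  from subgrad[OF conj_fun_at_subgradient[OF this]] have "cg \<le> g \<bullet> y0 - J y0"
    by (simp add: inner_diff_right inner_commute)
  moreover have "g \<bullet> y0 - J y0 \<le> cg" using conj_fun_ge[of g y0 J] cg by simp
  ultimately show ?thesis by simp
qed

section \<open>Duality for the entropic barycenter problem\<close>

locale entropic_barycenter =
  fixes eps :: real and C :: "real^'n^'n" and b :: "'k::finite \<Rightarrow> real^'n"
    and lam :: "'k \<Rightarrow> real" and A :: "real^'n \<Rightarrow> real^'p" and J :: "real^'p \<Rightarrow> real"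
  assumes eps_pos: "eps > 0"
    and b_simplex: "\<forall>k. b k \<in> prob_simplex"
    and lam_pos: "\<forall>k. lam k > 0"
    and lam_sum: "(\<Sum>k\<in>UNIV. lam k) = 1"
    and A_lin: "linear A"
    and J_convex: "convex_on UNIV J"
begin

abbreviation "primal \<equiv> primal_obj eps C b lam A J"
abbreviation "dual \<equiv> dual_obj eps C b lam J"
abbreviation "feasible \<equiv> dual_feasible lam A"
abbreviation "dual_minimizer f g \<equiv> feasible f g \<and> (\<forall>f' g'. feasible f' g' \<longrightarrow> dual f g \<le> dual f' g')"
abbreviation "lse_sum f \<equiv> (\<Sum>k\<in>UNIV. lam k * lse_conj eps C (b k) (f k))"
abbreviation "marginal k \<equiv> gibbs_marginal eps C (b k)"

lemma dual_eq: "dual f g = ereal (lse_sum f) + conj_fun J g"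
proof -
  have "F_b_conj eps C (b k) (f k) = lse_conj eps C (b k) (f k)" for k
    using F_b_conj_eq_lse_conj[OF eps_pos] b_simplex by blast
  then show ?thesis unfolding dual_obj_def by simp
qed

lemma feasible_weighted_inner:
  assumes "feasible f g"
  shows "(\<Sum>k\<in>UNIV. lam k * (f k \<bullet> x)) = - (g \<bullet> A x)"
proof -
  have "(\<Sum>k\<in>UNIV. lam k *\<^sub>R f k) = - adjoint A g"
    using assms unfolding dual_feasible_def by (simp add: eq_neg_iff_add_eq_0 add.commute)
  then have "(\<Sum>k\<in>UNIV. lam k *\<^sub>R f k) \<bullet> x = - (x \<bullet> adjoint A g)"
    by (simp add: inner_commute)
  then show ?thesis
    unfolding adjoint_clauses(1)[OF A_lin] by (simp add: inner_sum_left inner_commute[of g])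
qed

lemma weak_duality:
  assumes fg: "feasible f g" and a: "a \<in> prob_simplex"
  shows "- ereal (primal a) \<le> dual f g"
proof -
  have "(\<Sum>k\<in>UNIV. lam k * (f k \<bullet> a - F_b eps C (b k) a)) \<le> lse_sum f"
    using F_b_fenchel_young[OF eps_pos a] b_simplex lam_pos
    by (intro sum_mono mult_left_mono) (auto simp: less_imp_le algebra_simps)
  then have "- (g \<bullet> A a) - (\<Sum>k\<in>UNIV. lam k * F_b eps C (b k) a) \<le> lse_sum f"
    using feasible_weighted_inner[OF fg, of a] by (simp add: right_diff_distrib sum_subtractf)
  then have "- ereal (primal a) \<le> ereal (lse_sum f) + ereal (g \<bullet> A a - J (A a))"
    unfolding primal_obj_def by simp
  also have "\<dots> \<le> dual f g"
    unfolding dual_eq by (intro add_left_mono conj_fun_ge)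
  finally show ?thesis .
qed

lemma dual_finite_feasible_exists: "\<exists>f g. feasible f g \<and> dual f g < \<infinity>"
proof -
  obtain g where "\<forall>y. J 0 + g \<bullet> (y - 0) \<le> J y"
    using convex_on_subgradient_exists[OF J_convex] by blast
  then have "conj_fun J g = ereal (- J 0)" using conj_fun_at_subgradient by fastforce
  moreover have "feasible (\<lambda>_. - adjoint A g) g"
    unfolding dual_feasible_def by (simp add: sum_negf scaleR_sum_left[symmetric] lam_sum)
  ultimately show ?thesis unfolding dual_eq by fastforce
qed

lemma dual_minimizer_conj_finite:
  assumes "dual_minimizer f g"
  obtains c where "conj_fun J g = ereal c"
proof -
  obtain f0 g0 where "feasible f0 g0" "dual f0 g0 < \<infinity>" using dual_finite_feasible_exists by blast
  then have "dual f g < \<infinity>" using assms by (meson le_less_trans)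
  then have "conj_fun J g \<noteq> \<infinity>" unfolding dual_eq by auto
  then show ?thesis using conj_fun_real that by blast
qed

lemma lse_sum_line_derivative:
  "((\<lambda>t. lse_sum (\<lambda>m. f m + t *\<^sub>R X m)) has_field_derivative
      (\<Sum>m\<in>UNIV. lam m * (marginal m (f m) \<bullet> X m))) (at 0)"
  by (intro DERIV_sum DERIV_cmult has_field_derivative_along_line lse_conj_has_derivative eps_pos)

lemma dual_minimizer_lse_sum_le:
  assumes opt: "dual_minimizer f g" and cg: "conj_fun J g = ereal cg"
    and fg': "feasible f' g'" and c: "conj_fun J g' \<le> ereal c"
  shows "lse_sum f + cg \<le> lse_sum f' + c"
proof -
  have "dual f g \<le> dual f' g'" using opt fg' by blast
  also have "\<dots> \<le> ereal (lse_sum f') + ereal c" unfolding dual_eq using c by (rule add_left_mono)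
  finally show ?thesis unfolding dual_eq cg by simp
qed

lemma dual_minimizer_common_marginal:
  assumes opt: "dual_minimizer f g"
  shows "marginal k (f k) = marginal l (f l)"
proof -
  obtain cg where cg: "conj_fun J g = ereal cg" using dual_minimizer_conj_finite[OF opt] .
  define v where "v = marginal k (f k) - marginal l (f l)"
  define X where "X m = (if m = k then (1 / lam k) *\<^sub>R v else 0) - (if m = l then (1 / lam l) *\<^sub>R v else 0)"
    for m
  have lam_nz: "lam k \<noteq> 0" "lam l \<noteq> 0" using lam_pos by (metis less_irrefl)+
  have "(\<Sum>m\<in>UNIV. lam m *\<^sub>R X m) = (\<Sum>m\<in>UNIV. (if m = k then v else 0) - (if m = l then v else 0))"
    by (rule sum.cong) (auto simp: X_def lam_nz scaleR_diff_right)
  then have X_balanced: "(\<Sum>m\<in>UNIV. lam m *\<^sub>R X m) = 0" by (simp add: sum_subtractf)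
  have feas: "feasible (\<lambda>m. f m + t *\<^sub>R X m) g" for t
  proof -
    have "(\<Sum>m\<in>UNIV. lam m *\<^sub>R t *\<^sub>R X m) = t *\<^sub>R (\<Sum>m\<in>UNIV. lam m *\<^sub>R X m)"
      by (simp add: scaleR_sum_right mult.commute)
    then show ?thesis using opt X_balanced unfolding dual_feasible_def
      by (simp add: scaleR_add_right sum.distrib)
  qed
  have "conj_fun J g \<le> ereal cg" using cg by simp
  from dual_minimizer_lse_sum_le[OF opt cg feas this]
  have "lse_sum f \<le> lse_sum (\<lambda>m. f m + t *\<^sub>R X m)" for t by simp
  then have "(\<Sum>m\<in>UNIV. lam m * (marginal m (f m) \<bullet> X m)) = 0"
    by (intro DERIV_local_min[OF lse_sum_line_derivative zero_less_one]) auto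
  moreover have "(\<Sum>m\<in>UNIV. lam m * (marginal m (f m) \<bullet> X m))
      = (\<Sum>m\<in>UNIV. (if m = k then marginal k (f k) \<bullet> v else 0) - (if m = l then marginal l (f l) \<bullet> v else 0))"
    by (rule sum.cong) (auto simp: X_def lam_nz inner_diff_right)
  ultimately have "v \<bullet> v = 0" unfolding v_def by (simp add: sum_subtractf inner_diff_left)
  then show ?thesis unfolding v_def by simp
qed

lemma dual_minimizer_conj_subgradient:
  assumes opt: "dual_minimizer f g" and marg: "\<forall>k. marginal k (f k) = a"
    and cg: "conj_fun J g = ereal cg" and c: "conj_fun J h = ereal c"
  shows "cg + A a \<bullet> (h - g) \<le> c"
proof -
  define w where "w = - adjoint A (h - g)"
  define \<phi> where "\<phi> t = lse_sum (\<lambda>m. f m + t *\<^sub>R w)" for t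
  have feas: "feasible (\<lambda>m. f m + t *\<^sub>R w) (g + t *\<^sub>R (h - g))" for t
  proof -
    have "adjoint A (g + t *\<^sub>R (h - g)) = adjoint A g + t *\<^sub>R adjoint A (h - g)"
      using adjoint_linear[OF A_lin] by (simp add: linear_add linear_scale)
    moreover have "(\<Sum>m\<in>UNIV. lam m *\<^sub>R (f m + t *\<^sub>R w)) = (\<Sum>m\<in>UNIV. lam m *\<^sub>R f m) + t *\<^sub>R w"
    proof -
      have "(\<Sum>m\<in>UNIV. lam m * t) = t" using lam_sum by (simp add: sum_distrib_right[symmetric])
      then show ?thesis by (simp add: scaleR_add_right sum.distrib scaleR_sum_left[symmetric])
    qed
    moreover have "adjoint A g + (\<Sum>m\<in>UNIV. lam m *\<^sub>R f m) = 0"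
      using opt unfolding dual_feasible_def by blast
    ultimately show ?thesis unfolding dual_feasible_def w_def by (simp add: algebra_simps)
  qed
  have "- (c - cg) \<le> a \<bullet> w"
  proof (rule secant_lower_bound_le_deriv)
    show "(\<phi> has_field_derivative a \<bullet> w) (at 0)"
      using lse_sum_line_derivative[of f "\<lambda>_. w"] marg lam_sum
      unfolding \<phi>_def by (simp add: sum_distrib_right[symmetric])
    fix t :: real
    assume "0 < t" "t < 1"
    then have "lse_sum f + cg \<le> \<phi> t + ((1 - t) * cg + t * c)"
      unfolding \<phi>_def by (intro dual_minimizer_lse_sum_le[OF opt cg feas conj_fun_segment_le[OF cg c]]) auto
    moreover have "\<phi> 0 = lse_sum f" unfolding \<phi>_def by simp
    ultimately show "\<phi> 0 + - (c - cg) * t \<le> \<phi> t" by (simp add: algebra_simps)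
  qed
  moreover have "a \<bullet> w = - (A a \<bullet> (h - g))"
    unfolding w_def using adjoint_clauses(1)[OF A_lin, of a "h - g"] by simp
  ultimately show ?thesis by simp
qed

lemma dual_minimizer_primal_solution:
  assumes opt: "dual_minimizer f g" and marg: "\<forall>k. marginal k (f k) = a"
  shows "a \<in> prob_simplex \<and> (\<forall>a'\<in>prob_simplex. primal a \<le> primal a') \<and> dual f g = - ereal (primal a)"
proof -
  obtain cg where cg: "conj_fun J g = ereal cg" using dual_minimizer_conj_finite[OF opt] .
  have fenchel: "cg = g \<bullet> A a - J (A a)"
    by (rule conj_fun_eq_at_conj_subgradient[OF J_convex cg dual_minimizer_conj_subgradient[OF opt marg cg]])
  have J_subgradient: "J (A a) + g \<bullet> (y - A a) \<le> J y" for y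
    using conj_fun_ge[of g y J] cg fenchel by (simp add: inner_diff_right)
  have F_at_a: "F_b eps C (b k) a = f k \<bullet> a - lse_conj eps C (b k) (f k)" for k
    using F_b_gibbs_marginal[OF eps_pos, of "b k" C "f k"] b_simplex marg by simp
  have "primal a \<le> primal a'" if a': "a' \<in> prob_simplex" for a'
  proof -
    have "(\<Sum>k\<in>UNIV. lam k * (f k \<bullet> (a' - a)))
        \<le> (\<Sum>k\<in>UNIV. lam k * (F_b eps C (b k) a' - F_b eps C (b k) a))"
    proof (intro sum_mono mult_left_mono)
      fix k
      show "f k \<bullet> (a' - a) \<le> F_b eps C (b k) a' - F_b eps C (b k) a"
        using F_b_fenchel_young[OF eps_pos a' b_simplex[rule_format, of k], of "f k" C] F_at_a[of k]
        by (simp add: inner_diff_right)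
      show "0 \<le> lam k" using lam_pos less_imp_le by blast
    qed
    moreover have "(\<Sum>k\<in>UNIV. lam k * (f k \<bullet> (a' - a))) = - (g \<bullet> (A a' - A a))"
      using feasible_weighted_inner[of f g "a' - a"] opt A_lin by (simp add: linear_diff)
    ultimately show ?thesis
      unfolding primal_obj_def using J_subgradient[of "A a'"]
      by (simp add: sum_subtractf right_diff_distrib inner_diff_right)
  qed
  moreover have "dual f g = - ereal (primal a)"
  proof -
    have "lse_sum f = (\<Sum>k\<in>UNIV. lam k * (f k \<bullet> a)) - (\<Sum>k\<in>UNIV. lam k * F_b eps C (b k) a)"
      using F_at_a by (simp add: right_diff_distrib sum_subtractf)
    then show ?thesis
      unfolding dual_eq cg fenchel primal_obj_def using feasible_weighted_inner[of f g a] opt by simp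
  qed
  moreover have "a \<in> prob_simplex" using gibbs_marginal_simplex b_simplex marg by metis
  ultimately show ?thesis by blast
qed

lemma dual_minimizer_solves_primal:
  assumes opt: "dual_minimizer f g"
  shows "\<exists>a. (\<forall>k. marginal k (f k) = a) \<and> a \<in> prob_simplex
           \<and> (\<forall>a'\<in>prob_simplex. primal a \<le> primal a') \<and> dual f g = - ereal (primal a)"
proof -
  obtain a where "\<forall>k. marginal k (f k) = a"
    using dual_minimizer_common_marginal[OF opt] by metis
  with dual_minimizer_primal_solution[OF opt this] show ?thesis by blast
qed

lemma dual_normalize:
  assumes fg: "feasible f g"
  obtains f' where "feasible f' g" and "dual f' g = dual f g"
    and "\<forall>k. f' k \<bullet> uniform_dist = - (g \<bullet> A uniform_dist)"
proof
  define d where "d k = - (g \<bullet> A uniform_dist) - f k \<bullet> uniform_dist" for k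
  define f' where "f' k = f k + d k *\<^sub>R 1" for k
  have d_balanced: "(\<Sum>k\<in>UNIV. lam k * d k) = 0"
    using feasible_weighted_inner[OF fg, of uniform_dist] lam_sum
    by (simp add: d_def right_diff_distrib sum_subtractf sum_negf sum_distrib_right[symmetric])
  have "(\<Sum>k\<in>UNIV. lam k *\<^sub>R f' k) = (\<Sum>k\<in>UNIV. lam k *\<^sub>R f k) + (\<Sum>k\<in>UNIV. lam k * d k) *\<^sub>R 1"
    unfolding f'_def by (simp add: scaleR_add_right sum.distrib scaleR_sum_left)
  then show "feasible f' g" using fg d_balanced unfolding dual_feasible_def by simp
  have "lse_conj eps C (b k) (f' k) = lse_conj eps C (b k) (f k) + d k" for k
    unfolding f'_def using lse_conj_add_const[OF eps_pos b_simplex[rule_format]] by blast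
  then have "lse_sum f' = lse_sum f" using d_balanced by (simp add: distrib_left sum.distrib)
  then show "dual f' g = dual f g" unfolding dual_eq by simp
  show "\<forall>k. f' k \<bullet> uniform_dist = - (g \<bullet> A uniform_dist)"
    unfolding f'_def d_def by (simp add: inner_add_left inner_one_uniform_dist)
qed

lemma lam_uniformly_positive: obtains \<Lambda> where "\<Lambda> > 0" and "\<forall>k. \<Lambda> \<le> lam k"
proof
  show "Min (range lam) > 0" using lam_pos Min_in[of "range lam"] by auto
qed simp

abbreviation "excess k x \<equiv> lse_conj eps C (b k) x - x \<bullet> uniform_dist"
abbreviation "uniform_cost \<equiv> (\<Sum>k\<in>UNIV. \<bar>F_b eps C (b k) uniform_dist\<bar>)"

lemma excess_ge: "- uniform_cost \<le> excess k x"
  using F_b_fenchel_young[OF eps_pos uniform_dist_prob_simplex b_simplex[rule_format, of k], of x C]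
    member_le_sum[of k UNIV "\<lambda>k. \<bar>F_b eps C (b k) uniform_dist\<bar>"]
  by simp

lemma dual_sublevel_weighted_excess:
  assumes fg: "feasible f g" and D0: "dual f g \<le> ereal D0"
    and M: "\<forall>y\<in>cball (A uniform_dist) 1. J y \<le> M"
  shows "(\<Sum>k\<in>UNIV. lam k * (excess k (f k) + uniform_cost)) + norm g \<le> \<bar>D0\<bar> + \<bar>M\<bar> + uniform_cost"
proof -
  have "ereal (lse_sum f + (g \<bullet> A uniform_dist + norm g - M))
      = ereal (lse_sum f) + ereal (g \<bullet> A uniform_dist + norm g - M)" by simp
  also have "\<dots> \<le> dual f g" unfolding dual_eq by (intro add_left_mono conj_fun_ge_norm[OF M])
  also have "\<dots> \<le> ereal D0" by (rule D0)
  finally have "lse_sum f + (g \<bullet> A uniform_dist + norm g - M) \<le> D0" by simp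
  moreover have "lse_sum f + g \<bullet> A uniform_dist = (\<Sum>k\<in>UNIV. lam k * excess k (f k))"
    using feasible_weighted_inner[OF fg, of uniform_dist] by (simp add: right_diff_distrib sum_subtractf)
  moreover have "(\<Sum>k\<in>UNIV. lam k * (excess k (f k) + uniform_cost))
      = (\<Sum>k\<in>UNIV. lam k * excess k (f k)) + uniform_cost"
    using lam_sum by (simp add: distrib_left sum.distrib sum_distrib_right[symmetric])
  ultimately show ?thesis by linarith
qed

lemma dual_sublevel_excess_bound:
  "\<exists>K. \<forall>f g. feasible f g \<and> dual f g \<le> ereal D0 \<longrightarrow> norm g \<le> K \<and> (\<forall>k. excess k (f k) \<le> K)"
proof -
  obtain M where M: "\<forall>y\<in>cball (A uniform_dist) 1. J y \<le> M"
    using convex_on_bounded_above_cball[OF J_convex] by blast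
  obtain \<Lambda> where \<Lambda>: "\<Lambda> > 0" "\<forall>k. \<Lambda> \<le> lam k" using lam_uniformly_positive by blast
  define K where "K = \<bar>D0\<bar> + \<bar>M\<bar> + uniform_cost"
  have cost_nonneg: "0 \<le> uniform_cost" by (simp add: sum_nonneg)
  then have K_nonneg: "0 \<le> K" unfolding K_def by simp
  have "norm g \<le> K / \<Lambda> + K \<and> (\<forall>k. excess k (f k) \<le> K / \<Lambda> + K)"
    if fg: "feasible f g" and D0: "dual f g \<le> ereal D0" for f g
  proof -
    have main: "(\<Sum>k\<in>UNIV. lam k * (excess k (f k) + uniform_cost)) + norm g \<le> K"
      unfolding K_def by (rule dual_sublevel_weighted_excess[OF fg D0 M])
    have terms_nonneg: "0 \<le> lam k * (excess k (f k) + uniform_cost)" for k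
      using excess_ge[of k "f k"] lam_pos by (simp add: less_imp_le)
    then have "0 \<le> (\<Sum>k\<in>UNIV. lam k * (excess k (f k) + uniform_cost))" by (simp add: sum_nonneg)
    then have g_le: "norm g \<le> K" using main by linarith
    have excess_le: "excess k (f k) \<le> K / \<Lambda> + K" for k
    proof -
      have "lam k * (excess k (f k) + uniform_cost) \<le> (\<Sum>k\<in>UNIV. lam k * (excess k (f k) + uniform_cost))"
        using terms_nonneg by (intro member_le_sum) auto
      with main norm_ge_zero[of g] have "lam k * (excess k (f k) + uniform_cost) \<le> K" by linarith
      then have "excess k (f k) + uniform_cost \<le> K / lam k"
        using lam_pos by (simp add: pos_le_divide_eq mult.commute)
      also have "\<dots> \<le> K / \<Lambda>" using \<Lambda> lam_pos K_nonneg by (intro divide_left_mono) auto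
      finally show ?thesis using cost_nonneg K_nonneg by linarith
    qed
    have "K \<le> K / \<Lambda> + K" using \<Lambda> K_nonneg by simp
    with g_le excess_le show ?thesis by auto
  qed
  then show ?thesis by blast
qed

lemma dual_normalized_sublevel_bounded:
  "\<exists>R. \<forall>f g. feasible f g \<and> (\<forall>k. f k \<bullet> uniform_dist = - (g \<bullet> A uniform_dist)) \<and> dual f g \<le> ereal D0
      \<longrightarrow> norm g \<le> R \<and> (\<forall>k i. \<bar>f k $ i\<bar> \<le> R)"
proof -
  obtain K where K: "\<forall>f g. feasible f g \<and> dual f g \<le> ereal D0
      \<longrightarrow> norm g \<le> K \<and> (\<forall>k. excess k (f k) \<le> K)"
    using dual_sublevel_excess_bound by blast
  define E where "E = (\<Sum>k\<in>UNIV. \<Sum>i\<in>UNIV. \<bar>F_b eps C (b k) (axis i 1)\<bar>)"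
  define R where "R = K + K * norm (A uniform_dist) + real CARD('n) * (K + E)"
  have E_nonneg: "0 \<le> E" unfolding E_def by (simp add: sum_nonneg)
  have E_bound: "F_b eps C (b k) (axis i 1) \<le> E" for k i
  proof -
    have "\<bar>F_b eps C (b k) (axis i 1)\<bar> \<le> (\<Sum>i\<in>UNIV. \<bar>F_b eps C (b k) (axis i 1)\<bar>)"
      by (rule member_le_sum) auto
    also have "\<dots> \<le> E" unfolding E_def by (rule member_le_sum) (auto simp: sum_nonneg)
    finally show ?thesis by simp
  qed
  have "norm g \<le> R \<and> (\<forall>k i. \<bar>f k $ i\<bar> \<le> R)"
    if fg: "feasible f g" and normal: "\<forall>k. f k \<bullet> uniform_dist = - (g \<bullet> A uniform_dist)"
      and D0: "dual f g \<le> ereal D0" for f g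
  proof -
    have "norm g \<le> K \<and> (\<forall>k. excess k (f k) \<le> K)" using K fg D0 by blast
    then have g_le: "norm g \<le> K" and excess_le: "\<And>k. excess k (f k) \<le> K" by auto
    then have K_nonneg: "0 \<le> K" using norm_ge_zero order_trans by blast
    have mean_le: "\<bar>f k \<bullet> uniform_dist\<bar> \<le> K * norm (A uniform_dist)" for k
    proof -
      have "\<bar>f k \<bullet> uniform_dist\<bar> = \<bar>g \<bullet> A uniform_dist\<bar>" using normal by simp
      also have "\<dots> \<le> norm g * norm (A uniform_dist)" by (rule Cauchy_Schwarz_ineq2)
      also have "\<dots> \<le> K * norm (A uniform_dist)" using g_le by (simp add: mult_right_mono)
      finally show ?thesis .
    qed
    have "f k $ i - f k \<bullet> uniform_dist \<le> K + E" for k i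
      using F_b_fenchel_young[OF eps_pos axis_prob_simplex[of i] b_simplex[rule_format, of k], of "f k" C]
        excess_le[of k] E_bound[of k i]
      by (simp add: inner_axis)
    then have comp: "\<bar>f k $ i\<bar> \<le> \<bar>f k \<bullet> uniform_dist\<bar> + real CARD('n) * (K + E)" for k i
      by (intro component_bound_by_mean) blast
    have "\<bar>f k $ i\<bar> \<le> R" for k i
      using comp[of k i] mean_le[of k] K_nonneg unfolding R_def by linarith
    moreover have "0 \<le> K * norm (A uniform_dist)" and "0 \<le> real CARD('n) * (K + E)"
      using K_nonneg E_nonneg by simp_all
    then have "norm g \<le> R" using g_le unfolding R_def by linarith
    ultimately show ?thesis by blast
  qed
  then show ?thesis by blast
qed

lemma feasible_limit:
  assumes feas: "\<forall>n. feasible (F n) (G n)"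
    and F: "\<forall>k. (\<lambda>n. F n k) \<longlonglongrightarrow> fs k" and G: "G \<longlonglongrightarrow> gs"
  shows "feasible fs gs"
proof -
  have "bounded_linear (adjoint A)"
    using adjoint_linear[OF A_lin] linear_conv_bounded_linear by blast
  from bounded_linear.tendsto[OF this G]
  have "(\<lambda>n. adjoint A (G n) + (\<Sum>k\<in>UNIV. lam k *\<^sub>R F n k))
      \<longlonglongrightarrow> adjoint A gs + (\<Sum>k\<in>UNIV. lam k *\<^sub>R fs k)"
    using F by (intro tendsto_add tendsto_sum tendsto_scaleR tendsto_const) auto
  moreover have "(\<lambda>n. adjoint A (G n) + (\<Sum>k\<in>UNIV. lam k *\<^sub>R F n k)) = (\<lambda>n. 0)"
    using feas unfolding dual_feasible_def by simp
  ultimately have "(\<lambda>n. 0) \<longlonglongrightarrow> adjoint A gs + (\<Sum>k\<in>UNIV. lam k *\<^sub>R fs k)"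
    by simp
  then have "adjoint A gs + (\<Sum>k\<in>UNIV. lam k *\<^sub>R fs k) = 0"
    by (simp add: LIMSEQ_const_iff)
  then show ?thesis unfolding dual_feasible_def .
qed

lemma dual_limit_le:
  assumes F: "\<forall>k. (\<lambda>n. F n k) \<longlonglongrightarrow> fs k" and G: "G \<longlonglongrightarrow> gs"
    and bound: "\<forall>n. dual (F n) (G n) \<le> ereal (u n)" and u: "u \<longlonglongrightarrow> u0"
  shows "dual fs gs \<le> ereal u0"
proof -
  have lse_lim: "(\<lambda>n. lse_sum (F n)) \<longlonglongrightarrow> lse_sum fs"
  proof (intro tendsto_sum tendsto_mult_left)
    fix k
    have "isCont (lse_conj eps C (b k)) (fs k)"
      using has_derivative_continuous[OF lse_conj_has_derivative[OF eps_pos]] by blast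
    then show "(\<lambda>n. lse_conj eps C (b k) (F n k)) \<longlonglongrightarrow> lse_conj eps C (b k) (fs k)"
      using F by (auto intro: isCont_tendsto_compose)
  qed
  have "conj_fun J gs \<le> ereal (u0 - lse_sum fs)"
  proof (rule conj_fun_le)
    fix y
    have "G n \<bullet> y - J y \<le> u n - lse_sum (F n)" for n
    proof -
      have "ereal (lse_sum (F n)) + ereal (G n \<bullet> y - J y) \<le> dual (F n) (G n)"
        unfolding dual_eq by (intro add_left_mono conj_fun_ge)
      from order_trans[OF this bound[rule_format, of n]] show ?thesis by simp
    qed
    moreover have "(\<lambda>n. G n \<bullet> y - J y) \<longlonglongrightarrow> gs \<bullet> y - J y"
      by (rule tendsto_diff[OF tendsto_inner[OF G tendsto_const] tendsto_const])
    ultimately show "gs \<bullet> y - J y \<le> u0 - lse_sum fs"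
      using LIMSEQ_le[OF _ tendsto_diff[OF u lse_lim]] by blast
  qed
  then have "dual fs gs \<le> ereal (lse_sum fs) + ereal (u0 - lse_sum fs)"
    unfolding dual_eq by (rule add_left_mono)
  then show ?thesis by simp
qed

lemma dual_minimizer_from_bounded_minimizing_seq:
  assumes feas: "\<forall>n. feasible (F n) (G n)"
    and bounded: "\<forall>n. norm (G n) \<le> R \<and> (\<forall>k i. \<bar>F n k $ i\<bar> \<le> R)"
    and minimizing: "\<forall>n. dual (F n) (G n) \<le> ereal (m + 1 / real (Suc n))"
    and lower: "\<forall>f g. feasible f g \<longrightarrow> ereal m \<le> dual f g"
  shows "\<exists>f g. dual_minimizer f g"
proof -
  obtain r fs gs where r: "strict_mono r" and F_lim: "\<forall>k. (\<lambda>n. F (r n) k) \<longlonglongrightarrow> fs k"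
    and G_lim: "(\<lambda>n. G (r n)) \<longlonglongrightarrow> gs"
    using bounded_sequences_convergent_subseq[of F R G] bounded by blast
  have "feasible fs gs" using feasible_limit[OF _ F_lim G_lim] feas by blast
  moreover have "dual fs gs \<le> ereal m"
  proof (rule dual_limit_le[OF F_lim G_lim])
    show "\<forall>n. dual (F (r n)) (G (r n)) \<le> ereal (m + 1 / real (Suc (r n)))"
      using minimizing by blast
    have "(\<lambda>n. 1 / real (Suc (r n))) \<longlonglongrightarrow> 0"
      using LIMSEQ_subseq_LIMSEQ[OF LIMSEQ_inverse_real_of_nat r] by (simp add: o_def inverse_eq_divide)
    then show "(\<lambda>n. m + 1 / real (Suc (r n))) \<longlonglongrightarrow> m"
      using tendsto_add[OF tendsto_const, of _ 0 sequentially m] by simp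
  qed
  ultimately show ?thesis using lower by (meson order_trans)
qed

lemma dual_attained: "\<exists>f g. dual_minimizer f g"
proof -
  define m where "m = (INF fg\<in>{(f, g). feasible f g}. dual (fst fg) (snd fg))"
  have m_le: "m \<le> dual f g" if "feasible f g" for f g
    unfolding m_def using that by (intro INF_lower2[of "(f, g)"]) auto
  have "m < \<infinity>" using dual_finite_feasible_exists m_le by (meson le_less_trans)
  moreover have "- ereal (primal uniform_dist) \<le> m"
    unfolding m_def using weak_duality[OF _ uniform_dist_prob_simplex] by (intro INF_greatest) auto
  ultimately obtain mr where mr: "m = ereal mr" by (cases m) auto
  have "\<exists>fg. feasible (fst fg) (snd fg) \<and> (\<forall>k. fst fg k \<bullet> uniform_dist = - (snd fg \<bullet> A uniform_dist))
      \<and> dual (fst fg) (snd fg) \<le> ereal (mr + 1 / real (Suc n))" for n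
  proof -
    have "m < ereal (mr + 1 / real (Suc n))" using mr by simp
    then obtain f g where fg: "feasible f g" "dual f g < ereal (mr + 1 / real (Suc n))"
      unfolding m_def INF_less_iff by auto
    obtain f' where "feasible f' g" "dual f' g = dual f g"
      "\<forall>k. f' k \<bullet> uniform_dist = - (g \<bullet> A uniform_dist)"
      using dual_normalize[OF fg(1)] .
    then show ?thesis using fg(2) by (intro exI[of _ "(f', g)"]) simp
  qed
  then obtain seq where seq: "\<forall>n. feasible (fst (seq n)) (snd (seq n))
      \<and> (\<forall>k. fst (seq n) k \<bullet> uniform_dist = - (snd (seq n) \<bullet> A uniform_dist))
      \<and> dual (fst (seq n)) (snd (seq n)) \<le> ereal (mr + 1 / real (Suc n))"
    using choice[of "\<lambda>n fg. feasible (fst fg) (snd fg)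
      \<and> (\<forall>k. fst fg k \<bullet> uniform_dist = - (snd fg \<bullet> A uniform_dist))
      \<and> dual (fst fg) (snd fg) \<le> ereal (mr + 1 / real (Suc n))"] by blast
  obtain R where R: "\<forall>f g. feasible f g \<and> (\<forall>k. f k \<bullet> uniform_dist = - (g \<bullet> A uniform_dist))
      \<and> dual f g \<le> ereal (mr + 1) \<longrightarrow> norm g \<le> R \<and> (\<forall>k i. \<bar>f k $ i\<bar> \<le> R)"
    using dual_normalized_sublevel_bounded by blast
  have "ereal (mr + 1 / real (Suc n)) \<le> ereal (mr + 1)" for n by simp
  then have "dual (fst (seq n)) (snd (seq n)) \<le> ereal (mr + 1)" for n
    using seq by (blast intro: order_trans)
  then have "\<forall>n. norm (snd (seq n)) \<le> R \<and> (\<forall>k i. \<bar>fst (seq n) k $ i\<bar> \<le> R)"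
    using R seq by blast
  then show ?thesis
    using dual_minimizer_from_bounded_minimizing_seq[of "\<lambda>n. fst (seq n)" "\<lambda>n. snd (seq n)" R mr]
      seq m_le unfolding mr by blast
qed

end

theorem mainTheorem7:
  fixes eps :: real and C :: "real^'n^'n" and b :: "'k::finite \<Rightarrow> real^'n"
    and lam :: "'k \<Rightarrow> real" and A :: "real^'n \<Rightarrow> real^'p" and J :: "real^'p \<Rightarrow> real"
  assumes eps_pos: "eps > 0"
    and b_simplex: "\<forall>k. b k \<in> prob_simplex"
    and lam_pos: "\<forall>k. lam k > 0"
    and lam_sum: "(\<Sum>k\<in>UNIV. lam k) = 1"
    and A_lin: "linear A"
    and J_convex: "convex_on UNIV J"
  shows "(\<exists>a0\<in>prob_simplex. \<forall>a\<in>prob_simplex. primal_obj eps C b lam A J a0 \<le> primal_obj eps C b lam A J a)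
       \<and> ereal (Inf (primal_obj eps C b lam A J ` prob_simplex))
           = - (INF fg\<in>{(f, g). dual_feasible lam A f g}. dual_obj eps C b lam J (fst fg) (snd fg))
       \<and> (\<forall>f g. dual_feasible lam A f g
              \<and> (\<forall>f' g'. dual_feasible lam A f' g' \<longrightarrow> dual_obj eps C b lam J f g \<le> dual_obj eps C b lam J f' g')
            \<longrightarrow> (\<exists>a. (\<forall>k. (F_b_conj eps C (b k) has_derivative (\<lambda>h. a \<bullet> h)) (at (f k)))
                    \<and> a \<in> prob_simplex
                    \<and> (\<forall>a'\<in>prob_simplex. primal_obj eps C b lam A J a \<le> primal_obj eps C b lam A J a')))"
proof -
  interpret entropic_barycenter eps C b lam A J
    using assms by (rule entropic_barycenter.intro)
  obtain fs gs where opt: "dual_minimizer fs gs" using dual_attained by blast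
  then obtain a where a: "a \<in> prob_simplex" "\<forall>a'\<in>prob_simplex. primal a \<le> primal a'"
    and gap: "dual fs gs = - ereal (primal a)"
    using dual_minimizer_solves_primal by blast
  have "Inf (primal ` prob_simplex) = primal a"
    using a by (intro cInf_eq_minimum) auto
  moreover have "(INF fg\<in>{(f, g). feasible f g}. dual (fst fg) (snd fg)) = dual fs gs"
    using opt by (intro antisym INF_lower2[of "(fs, gs)"] INF_greatest) auto
  moreover have "\<exists>a. (\<forall>k. (F_b_conj eps C (b k) has_derivative (\<lambda>h. a \<bullet> h)) (at (f k)))
      \<and> a \<in> prob_simplex \<and> (\<forall>a'\<in>prob_simplex. primal a \<le> primal a')"
    if fg: "dual_minimizer f g" for f g
  proof -
    obtain a where marg: "\<forall>k. marginal k (f k) = a" and "a \<in> prob_simplex"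
      "\<forall>a'\<in>prob_simplex. primal a \<le> primal a'"
      using dual_minimizer_solves_primal[OF fg] by blast
    moreover have "(F_b_conj eps C (b k) has_derivative (\<lambda>h. a \<bullet> h)) (at (f k))" for k
      using F_b_conj_has_derivative[OF eps_pos b_simplex[rule_format, of k], of C "f k"] marg by simp
    ultimately show ?thesis by blast
  qed
  ultimately show ?thesis using a gap by auto
qed

end
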